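(* Let $X\subseteq\mathbb{C}^n$ be a complex analytic variety, $x\in X$, $M$ an $\mathcal{O}_{X,x}$-submodule of $\mathcal{O}_{X,x}^p$, and $k\in\mathbb{N}$. Then: (a) $I_\Delta^k\, I_2((I_k(M))_D)\subseteq I_{2k}(M_D)$ at $(x,x)$; (b) if $I_k(M)$ is principal then $I_\Delta^{k-1}\, I_2((I_k(M))_D)\subseteq I_{2k}(M_D)$ at $(x,x)$.
   Context: $z_1,\dots,z_n$ are coordinates on $\mathbb{C}^n$, $\pi_1,\pi_2:X\times X\to X$ the projections, and $I_\Delta$ is the ideal of $\mathcal{O}_{X\times X,(x,x)}$ generated by $z_i\circ\pi_1-z_i\circ\pi_2$, $i=1,\dots,n$. For $h$ in $\mathcal{O}_{X,x}^p$ or $\mathcal{O}_{X,x}$, $h_D=(h\circ\pi_1,h\circ\pi_2)$; for a module or ideal $N$, $N_D$ is the submodule over $\mathcal{O}_{X\times X,(x,x)}$ generated by $\{h_D:h\in N\}$. $I_j(N)$ is the ideal of $j\times j$ minors of a matrix of generators of $N$. *)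

theory Defs
  imports "HOL-Analysis.Analysis" "HOL-Combinatorics.Permutations"
begin

text \<open>Germs of holomorphic functions on C^n are represented by functions
 complex^'n => complex that are holomorphic on a neighbourhood of the base point.\<close>

definition holo :: "complex^'n::finite \<Rightarrow> (complex^'n \<Rightarrow> complex) \<Rightarrow> bool" where
  "holo x f \<longleftrightarrow> (\<exists>U. open U \<and> x \<in> U \<and>
     (\<forall>y\<in>U. \<exists>D. (f has_derivative D) (at y) \<and> (\<forall>c v. D (c *s v) = c * D v)))"


definition holo_vec :: "complex^'n::finite \<Rightarrow> (complex^'n \<Rightarrow> complex^'q::finite) \<Rightarrow> bool" where
  "holo_vec x f \<longleftrightarrow> (\<forall>i. holo x (\<lambda>y. f y $ i))"

definition analytic_variety :: "(complex^'n::finite) set \<Rightarrow> bool" where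
  "analytic_variety X \<longleftrightarrow> (\<exists>\<Omega>. open \<Omega> \<and> X \<subseteq> \<Omega> \<and>
     (\<forall>y\<in>\<Omega>. \<exists>U F. open U \<and> y \<in> U \<and> U \<subseteq> \<Omega> \<and> finite F \<and>
        (\<forall>f\<in>F. \<forall>z\<in>U. holo z f) \<and> X \<inter> U = {z\<in>U. \<forall>f\<in>F. f z = 0}))"

definition germ_eq :: "(complex^'n::finite) set \<Rightarrow> complex^'n \<Rightarrow> (complex^'n \<Rightarrow> 'b) \<Rightarrow> (complex^'n \<Rightarrow> 'b) \<Rightarrow> bool" where
  "germ_eq X x f g \<longleftrightarrow> (\<exists>U. open U \<and> x \<in> U \<and> (\<forall>y\<in>X \<inter> U. f y = g y))"

text \<open>Ideal of O_{X,x} generated by a set of germs (as set of representatives).\<close>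
definition gen_ideal :: "(complex^'n::finite) set \<Rightarrow> complex^'n \<Rightarrow> (complex^'n \<Rightarrow> complex) set \<Rightarrow> (complex^'n \<Rightarrow> complex) set" where
  "gen_ideal X x S = {f. holo x f \<and> (\<exists>(m::nat) a s. (\<forall>i<m. holo x (a i) \<and> s i \<in> S) \<and>
       germ_eq X x f (\<lambda>y. \<Sum>i<m. a i y * s i y))}"

definition gen_module :: "(complex^'n::finite) set \<Rightarrow> complex^'n \<Rightarrow> (complex^'n \<Rightarrow> complex^'q::finite) set \<Rightarrow> (complex^'n \<Rightarrow> complex^'q) set" where
  "gen_module X x S = {f. holo_vec x f \<and> (\<exists>(m::nat) a s. (\<forall>i<m. holo x (a i) \<and> s i \<in> S) \<and>
       germ_eq X x f (\<lambda>y. \<Sum>i<m. a i y *s s i y))}"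

definition is_submodule :: "(complex^'n::finite) set \<Rightarrow> complex^'n \<Rightarrow> (complex^'n \<Rightarrow> complex^'q::finite) set \<Rightarrow> bool" where
  "is_submodule X x M \<longleftrightarrow> M = gen_module X x M"

definition principal_ideal :: "(complex^'n::finite) set \<Rightarrow> complex^'n \<Rightarrow> (complex^'n \<Rightarrow> complex) set \<Rightarrow> bool" where
  "principal_ideal X x I \<longleftrightarrow> (\<exists>g. holo x g \<and> I = gen_ideal X x {g})"

definition detk :: "nat \<Rightarrow> (nat \<Rightarrow> nat \<Rightarrow> complex) \<Rightarrow> complex" where
  "detk k A = (\<Sum>\<sigma>\<in>{\<sigma>. \<sigma> permutes {..<k}}. of_int (sign \<sigma>) * (\<Prod>i<k. A i (\<sigma> i)))"

text \<open>I_k(M): ideal generated by the k x k minors of a matrix whose columns are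
  elements of M (rows r, columns c; repeated rows/columns give zero minors).\<close>
definition minor_ideal :: "(complex^'n::finite) set \<Rightarrow> complex^'n \<Rightarrow> nat \<Rightarrow> (complex^'n \<Rightarrow> complex^'q::finite) set \<Rightarrow> (complex^'n \<Rightarrow> complex) set" where
  "minor_ideal X x k M = gen_ideal X x
     {(\<lambda>y. detk k (\<lambda>i j. c j y $ r i)) | c r. (\<forall>j<k. c j \<in> M)}"

definition ideal_mult :: "(complex^'n::finite) set \<Rightarrow> complex^'n \<Rightarrow> (complex^'n \<Rightarrow> complex) set \<Rightarrow> (complex^'n \<Rightarrow> complex) set \<Rightarrow> (complex^'n \<Rightarrow> complex) set" where
  "ideal_mult X x I J = gen_ideal X x {(\<lambda>y. f y * g y) | f g. f \<in> I \<and> g \<in> J}"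

fun ideal_pow :: "(complex^'n::finite) set \<Rightarrow> complex^'n \<Rightarrow> (complex^'n \<Rightarrow> complex) set \<Rightarrow> nat \<Rightarrow> (complex^'n \<Rightarrow> complex) set" where
  "ideal_pow X x I 0 = gen_ideal X x {(\<lambda>y. 1)}"
| "ideal_pow X x I (Suc m) = ideal_mult X x (ideal_pow X x I m) I"

text \<open>C^n x C^n is modelled as complex^('n+'n); projections pi_1, pi_2.\<close>
definition pr1 :: "complex^('n::finite + 'n) \<Rightarrow> complex^'n" where
  "pr1 z = (\<chi> i. z $ Inl i)"
definition pr2 :: "complex^('n::finite + 'n) \<Rightarrow> complex^'n" where
  "pr2 z = (\<chi> i. z $ Inr i)"

definition dbl :: "(complex^'n::finite) set \<Rightarrow> (complex^('n + 'n)) set" where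
  "dbl X = {z. pr1 z \<in> X \<and> pr2 z \<in> X}"

definition dpt :: "complex^'n::finite \<Rightarrow> complex^('n + 'n)" where
  "dpt x = (\<chi> j. case j of Inl i \<Rightarrow> x $ i | Inr i \<Rightarrow> x $ i)"

definition I_Delta :: "(complex^'n::finite) set \<Rightarrow> complex^'n \<Rightarrow> (complex^('n+'n) \<Rightarrow> complex) set" where
  "I_Delta X x = gen_ideal (dbl X) (dpt x) {(\<lambda>z. z $ Inl i - z $ Inr i) | i. True}"

definition vecD :: "(complex^'n::finite \<Rightarrow> complex^'q::finite) \<Rightarrow> complex^('n+'n) \<Rightarrow> complex^('q+'q)" where
  "vecD h z = (\<chi> j. case j of Inl i \<Rightarrow> h (pr1 z) $ i | Inr i \<Rightarrow> h (pr2 z) $ i)"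

definition mod_D :: "(complex^'n::finite) set \<Rightarrow> complex^'n \<Rightarrow> (complex^'n \<Rightarrow> complex^'q::finite) set \<Rightarrow> (complex^('n+'n) \<Rightarrow> complex^('q+'q)) set" where
  "mod_D X x N = gen_module (dbl X) (dpt x) (vecD ` N)"

definition as_module :: "(complex^'n::finite \<Rightarrow> complex) set \<Rightarrow> (complex^'n \<Rightarrow> complex^1) set" where
  "as_module I = {(\<lambda>y. \<chi> _. f y) | f. f \<in> I}"

end

theory Submission
  imports Defs "Jordan_Normal_Form.Determinant"
begin

(* Everything is linear algebra over the ring of germs.

   For c_1, ..., c_k, c'_1, ..., c'_k in M and germs e_1, ..., e_k, the columns
   (e_j c_j)_D - (e_j o pi_2) (c_j)_D = ((e_j o pi_1 - e_j o pi_2) (c_j o pi_1), 0) and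
   (c'_j)_D of M_D form a block triangular matrix.  Hence one of its 2k x 2k minors is
     prod_j (e_j o pi_1 - e_j o pi_2) * (det_r c) o pi_1 * (det_r' c') o pi_2,
   and by bilinearity P * (f o pi_1) * (g o pi_2) lies in I_2k(M_D) for f, g in I_k(M) and
   every product P of k differences z_i o pi_1 - z_i o pi_2.  Modulo germs, a 2 x 2 minor
   of (I_k(M))_D is a combination of f o pi_1 * g o pi_2 - g o pi_1 * f o pi_2, which gives (a).
   If I_k(M) = (g), then f = a g, f' = b g and
     f_1 f'_2 - f'_1 f_2 = (b_2 (a_1 - a_2) - a_2 (b_1 - b_2)) g_1 g_2,
   so a_1 - a_2 and b_1 - b_2 each supply one of the k differences, and (b) follows with
   k - 1 generators of I_Delta. *)

(* Jordan_Normal_Form is needed only for the block determinant formula; its vector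
   indexing notation would clash with the one of complex^'n. *)
no_notation Matrix.vec_index (infixl \<open>$\<close> 100)

section \<open>Determinants\<close>

lemma detk_eq_det: "detk n A = Determinant.det (Matrix.mat n n (\<lambda>(i, j). A i j))"
  unfolding detk_def Determinant.det_def by (simp add: atLeast0LessThan)

lemma permutes_lessThan_less: "\<sigma> permutes {..<k} \<Longrightarrow> i < k \<Longrightarrow> \<sigma> i < (k::nat)"
  using permutes_in_image by fastforce

lemma detk_cong:
  assumes "\<And>i j. i < k \<Longrightarrow> j < k \<Longrightarrow> A i j = B i j"
  shows "detk k A = detk k B"
  unfolding detk_def using assms
  by (intro sum.cong refl arg_cong2[where f = "(*)"] prod.cong) (auto simp: permutes_lessThan_less)

lemma detk_2: "detk 2 A = A 0 0 * A 1 1 - A 0 1 * A 1 0"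
proof -
  have "{..<2::nat} = insert 0 {1}" by auto
  then show ?thesis unfolding detk_def
    by (simp add: sum_over_permutations_insert permutes_sing sign_swap_id sign_id transpose_def)
qed

lemma detk_mult_cols: "detk k (\<lambda>i j. d j * A i j) = (\<Prod>j<k. d j) * detk k A"
proof -
  have "(\<Prod>i<k. d (\<sigma> i) * A i (\<sigma> i)) = (\<Prod>j<k. d j) * (\<Prod>i<k. A i (\<sigma> i))"
    if "\<sigma> permutes {..<k}" for \<sigma>
    using prod.permute[OF that, of d] by (simp add: prod.distrib comp_def)
  then show ?thesis unfolding detk_def by (simp add: sum_distrib_left mult_ac)
qed

lemma detk_block_lower_left_zero:
  assumes "\<And>i j. k \<le> i \<Longrightarrow> i < k + m \<Longrightarrow> j < k \<Longrightarrow> A i j = 0"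
  shows "detk (k + m) A = detk k A * detk m (\<lambda>i j. A (k + i) (k + j))"
proof -
  have blocks: "Matrix.mat (k + m) (k + m) (\<lambda>(i, j). A i j)
      = four_block_mat (Matrix.mat k k (\<lambda>(i, j). A i j)) (Matrix.mat k m (\<lambda>(i, j). A i (k + j)))
          (0\<^sub>m m k) (Matrix.mat m m (\<lambda>(i, j). A (k + i) (k + j)))"
    by (rule eq_matI) (auto simp: four_block_mat_def assms)
  show ?thesis unfolding detk_eq_det blocks
    by (rule det_four_block_mat_lower_left_zero) auto
qed

section \<open>Holomorphic germs\<close>

lemma holo_iff_eventually:
  "holo x f \<longleftrightarrow>
     (\<forall>\<^sub>F y in nhds x. \<exists>D. (f has_derivative D) (at y) \<and> (\<forall>c v. D (c *s v) = c * D v))"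
  unfolding holo_def eventually_nhds by blast

lemma holo_const [simp]: "holo x (\<lambda>y. c)"
  unfolding holo_iff_eventually by (intro always_eventually allI exI[of _ "\<lambda>_. 0"]) simp

lemma holo_coord [simp]: "holo x (\<lambda>y. y $ i)"
  unfolding holo_iff_eventually
  by (intro always_eventually allI exI[of _ "\<lambda>v. v $ i"])
    (simp add: bounded_linear_imp_has_derivative[OF bounded_linear_vec_nth])

lemma holo_combine:
  assumes "holo x f" "holo x g"
    and "\<And>y D1 D2. (f has_derivative D1) (at y) \<Longrightarrow> (g has_derivative D2) (at y) \<Longrightarrow>
      \<forall>c v. D1 (c *s v) = c * D1 v \<Longrightarrow> \<forall>c v. D2 (c *s v) = c * D2 v \<Longrightarrow>
      (h has_derivative H y D1 D2) (at y) \<and> (\<forall>c v. H y D1 D2 (c *s v) = c * H y D1 D2 v)"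
  shows "holo x h"
  using assms(1,2) unfolding holo_iff_eventually by eventually_elim (use assms(3) in blast)

lemma holo_add:
  assumes "holo x f" "holo x g" shows "holo x (\<lambda>y. f y + g y)"
  by (rule holo_combine[OF assms, where H = "\<lambda>y D1 D2 v. D1 v + D2 v"])
    (auto intro: has_derivative_add simp: distrib_left)

lemma holo_diff:
  assumes "holo x f" "holo x g" shows "holo x (\<lambda>y. f y - g y)"
  by (rule holo_combine[OF assms, where H = "\<lambda>y D1 D2 v. D1 v - D2 v"])
    (auto intro: has_derivative_diff simp: right_diff_distrib)

lemma holo_mult:
  assumes "holo x f" "holo x g" shows "holo x (\<lambda>y. f y * g y)"
  by (rule holo_combine[OF assms, where H = "\<lambda>y D1 D2 v. f y * D2 v + D1 v * g y"])
    (rule conjI, rule has_derivative_mult, simp_all add: algebra_simps)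

lemma holo_uminus: "holo x f \<Longrightarrow> holo x (\<lambda>y. - f y)"
  using holo_diff[OF holo_const[of x 0]] by simp

lemma holo_sum:
  "finite A \<Longrightarrow> (\<And>i. i \<in> A \<Longrightarrow> holo x (f i)) \<Longrightarrow> holo x (\<lambda>y. \<Sum>i\<in>A. f i y)"
  by (induction A rule: finite_induct) (auto intro: holo_add)

lemma holo_prod:
  "finite A \<Longrightarrow> (\<And>i. i \<in> A \<Longrightarrow> holo x (f i)) \<Longrightarrow> holo x (\<lambda>y. \<Prod>i\<in>A. f i y)"
  by (induction A rule: finite_induct) (auto intro: holo_mult)

lemma holo_detk:
  assumes "\<And>i j. i < k \<Longrightarrow> j < k \<Longrightarrow> holo x (\<lambda>y. A i j y)"
  shows "holo x (\<lambda>y. detk k (\<lambda>i j. A i j y))"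
  unfolding detk_def
  by (intro holo_sum holo_prod holo_mult holo_const)
    (auto intro!: assms simp: permutes_lessThan_less finite_permutations)

lemma holo_minor:
  assumes "\<And>j. j < k \<Longrightarrow> holo_vec x (c j)"
  shows "holo x (\<lambda>y. detk k (\<lambda>i j. c j y $ r i))"
  using assms unfolding holo_vec_def by (intro holo_detk) blast

lemma holo_compose_linear:
  assumes L: "bounded_linear L" "\<And>c v. L (c *s v) = c *s L v" and f: "holo (L z) f"
  shows "holo z (\<lambda>w. f (L w))"
proof -
  have "filterlim L (nhds (L z)) (nhds z)"
    by (rule bounded_linear.tendsto[OF L(1) filterlim_ident])
  with f have "\<forall>\<^sub>F w in nhds z.
      \<exists>D. (f has_derivative D) (at (L w)) \<and> (\<forall>c v. D (c *s v) = c * D v)"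
    unfolding holo_iff_eventually by (rule eventually_compose_filterlim)
  then show ?thesis unfolding holo_iff_eventually
  proof eventually_elim
    case (elim w)
    then obtain D where D: "(f has_derivative D) (at (L w))" "\<forall>c v. D (c *s v) = c * D v"
      by blast
    have "((\<lambda>w. f (L w)) has_derivative (\<lambda>v. D (L v))) (at w)"
      by (rule has_derivative_compose[OF bounded_linear_imp_has_derivative[OF L(1)] D(1)])
    with D(2) show ?case by (auto simp: L(2))
  qed
qed

lemma germ_eq_iff_eventually: "germ_eq X x f g \<longleftrightarrow> (\<forall>\<^sub>F y in nhds x. y \<in> X \<longrightarrow> f y = g y)"
  unfolding germ_eq_def eventually_nhds by blast

lemma germ_eq_refl [simp]: "germ_eq X x f f"
  unfolding germ_eq_iff_eventually by simp

lemma germ_eq_trans: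
  assumes "germ_eq X x f g" "germ_eq X x g h" shows "germ_eq X x f h"
  using assms unfolding germ_eq_iff_eventually by eventually_elim simp

lemma germ_eq_cong:
  assumes "germ_eq X x f f'" "germ_eq X x g g'"
  shows "germ_eq X x (\<lambda>y. h y (f y) (g y)) (\<lambda>y. h y (f' y) (g' y))"
  using assms unfolding germ_eq_iff_eventually by eventually_elim simp

lemma germ_eq_pullback:
  assumes "germ_eq X x f g" and L: "bounded_linear L" "L z = x" "\<And>w. w \<in> Y \<Longrightarrow> L w \<in> X"
  shows "germ_eq Y z (\<lambda>w. f (L w)) (\<lambda>w. g (L w))"
proof -
  have "filterlim L (nhds (L z)) (nhds z)"
    by (rule bounded_linear.tendsto[OF L(1) filterlim_ident])
  then have "filterlim L (nhds x) (nhds z)"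
    using L(2) by simp
  with assms(1) have "\<forall>\<^sub>F w in nhds z. L w \<in> X \<longrightarrow> f (L w) = g (L w)"
    unfolding germ_eq_iff_eventually by (rule eventually_compose_filterlim)
  then show ?thesis unfolding germ_eq_iff_eventually by eventually_elim (use L(3) in blast)
qed

section \<open>Ideals and modules generated by germs\<close>

lemma gen_ideal_holo: "f \<in> gen_ideal X x S \<Longrightarrow> holo x f"
  unfolding gen_ideal_def by blast

lemma gen_ideal_intro:
  assumes "holo x f" "\<forall>i<(m::nat). holo x (a i) \<and> s i \<in> S"
    "germ_eq X x f (\<lambda>y. \<Sum>i<m. a i y * s i y)"
  shows "f \<in> gen_ideal X x S"
  using assms unfolding gen_ideal_def by blast

lemma gen_ideal_generator: "s \<in> S \<Longrightarrow> holo x s \<Longrightarrow> s \<in> gen_ideal X x S"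
  by (rule gen_ideal_intro[where m = 1 and a = "\<lambda>_ _. 1" and s = "\<lambda>_. s"]) auto

lemma gen_ideal_zero: "(\<lambda>y. 0) \<in> gen_ideal X x S"
  unfolding gen_ideal_def by (auto intro!: exI[of _ "0::nat"])

lemma gen_ideal_germ_eq:
  "holo x f \<Longrightarrow> germ_eq X x f g \<Longrightarrow> g \<in> gen_ideal X x S \<Longrightarrow> f \<in> gen_ideal X x S"
  unfolding gen_ideal_def using germ_eq_trans by blast

lemma gen_ideal_add:
  assumes f: "f \<in> gen_ideal X x S" and g: "g \<in> gen_ideal X x S"
  shows "(\<lambda>y. f y + g y) \<in> gen_ideal X x S"
proof -
  obtain m :: nat and a s where ms: "\<forall>i<m. holo x (a i) \<and> s i \<in> S"
    "germ_eq X x f (\<lambda>y. \<Sum>i<m. a i y * s i y)"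
    using f unfolding gen_ideal_def by blast
  obtain n :: nat and b t where nt: "\<forall>i<n. holo x (b i) \<and> t i \<in> S"
    "germ_eq X x g (\<lambda>y. \<Sum>i<n. b i y * t i y)"
    using g unfolding gen_ideal_def by blast
  define c where "c i = (if i < m then a i else b (i - m))" for i
  define u where "u i = (if i < m then s i else t (i - m))" for i
  have concat: "(\<Sum>i<m + n. F i) = (\<Sum>i<m. F i) + (\<Sum>i<n. F (m + i))" for F :: "nat \<Rightarrow> complex"
    by (induction n) (auto simp: add_ac)
  have "germ_eq X x (\<lambda>y. f y + g y) (\<lambda>y. (\<Sum>i<m. a i y * s i y) + (\<Sum>i<n. b i y * t i y))"
    using ms(2) nt(2) by (rule germ_eq_cong)
  also have "(\<lambda>y. (\<Sum>i<m. a i y * s i y) + (\<Sum>i<n. b i y * t i y)) = (\<lambda>y. \<Sum>i<m + n. c i y * u i y)"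
    unfolding concat c_def u_def by simp
  finally have "germ_eq X x (\<lambda>y. f y + g y) (\<lambda>y. \<Sum>i<m + n. c i y * u i y)" .
  moreover have "\<forall>i<m + n. holo x (c i) \<and> u i \<in> S"
    using ms(1) nt(1) by (auto simp: c_def u_def)
  ultimately show ?thesis
    by (intro gen_ideal_intro holo_add gen_ideal_holo[OF f] gen_ideal_holo[OF g])
qed

lemma gen_ideal_mult_left:
  assumes a: "holo x a" and f: "f \<in> gen_ideal X x S"
  shows "(\<lambda>y. a y * f y) \<in> gen_ideal X x S"
proof -
  obtain m :: nat and b s where ms: "\<forall>i<m. holo x (b i) \<and> s i \<in> S"
    "germ_eq X x f (\<lambda>y. \<Sum>i<m. b i y * s i y)"
    using f unfolding gen_ideal_def by blast
  have "germ_eq X x (\<lambda>y. a y * f y) (\<lambda>y. a y * (\<Sum>i<m. b i y * s i y))"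
    using germ_eq_refl ms(2) by (rule germ_eq_cong)
  also have "(\<lambda>y. a y * (\<Sum>i<m. b i y * s i y)) = (\<lambda>y. \<Sum>i<m. (a y * b i y) * s i y)"
    by (simp add: sum_distrib_left mult.assoc)
  finally have "germ_eq X x (\<lambda>y. a y * f y) (\<lambda>y. \<Sum>i<m. (a y * b i y) * s i y)" .
  moreover have "\<forall>i<m. holo x (\<lambda>y. a y * b i y) \<and> s i \<in> S"
    using ms(1) a by (auto intro: holo_mult)
  ultimately show ?thesis
    by (intro gen_ideal_intro holo_mult a gen_ideal_holo[OF f])
qed

lemma gen_ideal_diff:
  assumes "f \<in> gen_ideal X x S" "g \<in> gen_ideal X x S"
  shows "(\<lambda>y. f y - g y) \<in> gen_ideal X x S"
  using gen_ideal_add[OF assms(1) gen_ideal_mult_left[OF holo_const[of x "-1"] assms(2)]] by simp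

lemma gen_ideal_sum:
  "finite A \<Longrightarrow> (\<And>i. i \<in> A \<Longrightarrow> f i \<in> gen_ideal X x S) \<Longrightarrow> (\<lambda>y. \<Sum>i\<in>A. f i y) \<in> gen_ideal X x S"
  by (induction A rule: finite_induct) (auto intro: gen_ideal_add gen_ideal_zero)

lemma gen_ideal_pullback:
  fixes L :: "complex^'m::finite \<Rightarrow> complex^'n::finite"
  assumes L: "bounded_linear L" "\<And>c v. L (c *s v) = c *s L v" "L z = x" "\<And>w. w \<in> Y \<Longrightarrow> L w \<in> X"
    and Q: "holo z Q"
    and gen: "\<And>s. s \<in> S \<Longrightarrow> (\<lambda>w. Q w * s (L w)) \<in> gen_ideal Y z R"
    and f: "f \<in> gen_ideal X x S"
  shows "(\<lambda>w. Q w * f (L w)) \<in> gen_ideal Y z R"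
proof -
  obtain m :: nat and a s where ms: "\<forall>i<m. holo x (a i) \<and> s i \<in> S"
    "germ_eq X x f (\<lambda>y. \<Sum>i<m. a i y * s i y)"
    using f unfolding gen_ideal_def by blast
  have holo_L: "holo z (\<lambda>w. h (L w))" if "holo x h" for h
    using holo_compose_linear[OF L(1,2)] that L(3) by blast
  have "(\<lambda>w. \<Sum>i<m. a i (L w) * (Q w * s i (L w))) \<in> gen_ideal Y z R"
    using ms(1) by (intro gen_ideal_sum gen_ideal_mult_left holo_L gen) auto
  moreover have "germ_eq Y z (\<lambda>w. Q w * f (L w)) (\<lambda>w. Q w * (\<Sum>i<m. a i (L w) * s i (L w)))"
    using germ_eq_refl germ_eq_pullback[OF ms(2) L(1,3,4)] by (rule germ_eq_cong)
  moreover have "holo z (\<lambda>w. Q w * f (L w))"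
    by (intro holo_mult Q holo_L gen_ideal_holo[OF f])
  ultimately show ?thesis
    by (auto intro: gen_ideal_germ_eq simp: sum_distrib_left mult.left_commute)
qed

lemma gen_ideal_mult_left_of_generators:
  assumes "holo x q" "\<And>s. s \<in> S \<Longrightarrow> (\<lambda>y. q y * s y) \<in> gen_ideal X x R" "f \<in> gen_ideal X x S"
  shows "(\<lambda>y. q y * f y) \<in> gen_ideal X x R"
proof -
  have "(\<lambda>y. q y * f (id y)) \<in> gen_ideal X x R"
    by (rule gen_ideal_pullback[where L = id])
      (use assms in \<open>auto simp: id_def bounded_linear_ident\<close>)
  then show ?thesis by simp
qed

lemma gen_ideal_subset:
  assumes "\<And>t. t \<in> T \<Longrightarrow> t \<in> gen_ideal X x S"
  shows "gen_ideal X x T \<subseteq> gen_ideal X x S"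
proof
  fix f assume "f \<in> gen_ideal X x T"
  with gen_ideal_mult_left_of_generators[where q = "\<lambda>_. 1" and S = T and R = S] assms
  show "f \<in> gen_ideal X x S" by simp
qed

lemma gen_ideal_mult:
  assumes S: "\<And>s. s \<in> S \<Longrightarrow> holo x s"
    and gen: "\<And>s t. s \<in> S \<Longrightarrow> t \<in> T \<Longrightarrow> (\<lambda>y. s y * t y) \<in> gen_ideal X x R"
    and f: "f \<in> gen_ideal X x S" and g: "g \<in> gen_ideal X x T"
  shows "(\<lambda>y. f y * g y) \<in> gen_ideal X x R"
proof -
  have "(\<lambda>y. g y * s y) \<in> gen_ideal X x R" if "s \<in> S" for s
    using gen_ideal_mult_left_of_generators[OF S[OF that] gen[OF that] g]
    by (simp add: mult.commute)
  from gen_ideal_mult_left_of_generators[OF gen_ideal_holo[OF g] this f] show ?thesis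
    by (simp add: mult.commute)
qed

lemma gen_ideal_singletonE:
  assumes "f \<in> gen_ideal X x {g}"
  obtains a where "holo x a" "germ_eq X x f (\<lambda>y. a y * g y)"
proof -
  obtain m :: nat and b s where ms: "\<forall>i<m. holo x (b i) \<and> s i \<in> {g}"
    "germ_eq X x f (\<lambda>y. \<Sum>i<m. b i y * s i y)"
    using assms unfolding gen_ideal_def by blast
  have "(\<lambda>y. \<Sum>i<m. b i y * s i y) = (\<lambda>y. (\<Sum>i<m. b i y) * g y)"
    using ms(1) by (simp add: sum_distrib_right)
  moreover have "holo x (\<lambda>y. \<Sum>i<m. b i y)"
    using ms(1) by (intro holo_sum) auto
  ultimately show ?thesis
    using that ms(2) by metis
qed

lemma minor_ideal_holo: "f \<in> minor_ideal X x k M \<Longrightarrow> holo x f"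
  unfolding minor_ideal_def by (rule gen_ideal_holo)

lemma gen_module_holo_vec: "c \<in> gen_module X x S \<Longrightarrow> holo_vec x c"
  unfolding gen_module_def by blast

lemma gen_module_intro:
  assumes "\<forall>i<(m::nat). holo x (a i) \<and> s i \<in> S \<and> holo_vec x (s i)"
    and "\<And>y. c y = (\<Sum>i<m. a i y *s s i y)"
  shows "c \<in> gen_module X x S"
proof -
  have "holo_vec x c"
    using assms unfolding holo_vec_def by (auto intro!: holo_sum holo_mult)
  moreover have "c = (\<lambda>y. \<Sum>i<m. a i y *s s i y)"
    by (rule ext) (rule assms(2))
  ultimately show ?thesis
    using assms(1) unfolding gen_module_def by (auto intro!: exI[of _ m] exI[of _ a] exI[of _ s])
qed

lemma gen_module_linear_functional:
  assumes lin: "\<And>w a v. \<Phi> w (a *s v) = a * \<Phi> w v" "\<And>w v v'. \<Phi> w (v + v') = \<Phi> w v + \<Phi> w v'"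
    and gen: "\<And>s. s \<in> S \<Longrightarrow> (\<lambda>w. \<Phi> w (s w)) \<in> gen_ideal Y z R"
    and holo: "holo z (\<lambda>w. \<Phi> w (c w))"
    and c: "c \<in> gen_module Y z S"
  shows "(\<lambda>w. \<Phi> w (c w)) \<in> gen_ideal Y z R"
proof -
  obtain m :: nat and a s where ms: "\<forall>i<m. holo z (a i) \<and> s i \<in> S"
    "germ_eq Y z c (\<lambda>w. \<Sum>i<m. a i w *s s i w)"
    using c unfolding gen_module_def by blast
  have \<Phi>_sum: "\<Phi> w (\<Sum>i<m. a i w *s s i w) = (\<Sum>i<m. a i w * \<Phi> w (s i w))" for w
  proof -
    have "\<Phi> w 0 = 0" using lin(1)[of w 0 0] by simp
    then show ?thesis
      using sum_comp_morphism[of "\<Phi> w" "\<lambda>i. a i w *s s i w" "{..<m}"] lin by (simp add: comp_def)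
  qed
  have "germ_eq Y z (\<lambda>w. \<Phi> w (c w)) (\<lambda>w. \<Sum>i<m. a i w * \<Phi> w (s i w))"
    using germ_eq_cong[OF ms(2) germ_eq_refl, of "\<lambda>w v _. \<Phi> w v"] by (simp add: \<Phi>_sum)
  moreover have "(\<lambda>w. \<Sum>i<m. a i w * \<Phi> w (s i w)) \<in> gen_ideal Y z R"
    using ms(1) by (intro gen_ideal_sum gen_ideal_mult_left gen) auto
  ultimately show ?thesis
    by (rule gen_ideal_germ_eq[OF holo])
qed

lemma submodule_holo_vec: "is_submodule X x M \<Longrightarrow> c \<in> M \<Longrightarrow> holo_vec x c"
  unfolding is_submodule_def using gen_module_holo_vec by blast

lemma submodule_smult:
  assumes M: "is_submodule X x M" and c: "c \<in> M" and e: "holo x e"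
  shows "(\<lambda>y. e y *s c y) \<in> M"
proof -
  have "(\<lambda>y. e y *s c y) \<in> gen_module X x M"
    by (rule gen_module_intro[where m = 1 and a = "\<lambda>_. e" and s = "\<lambda>_. c"])
      (use c e submodule_holo_vec[OF M c] in auto)
  with M show ?thesis unfolding is_submodule_def by blast
qed

section \<open>The doubled space\<close>

lemma pr1_nth [simp]: "pr1 z $ i = z $ Inl i"
  by (simp add: pr1_def)

lemma pr2_nth [simp]: "pr2 z $ i = z $ Inr i"
  by (simp add: pr2_def)

lemma pr1_dpt [simp]: "pr1 (dpt x) = x"
  by (simp add: Finite_Cartesian_Product.vec_eq_iff dpt_def)

lemma pr2_dpt [simp]: "pr2 (dpt x) = x"
  by (simp add: Finite_Cartesian_Product.vec_eq_iff dpt_def)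

lemma pr1_smult: "pr1 (c *s v) = c *s pr1 v"
  by (simp add: Finite_Cartesian_Product.vec_eq_iff)

lemma pr2_smult: "pr2 (c *s v) = c *s pr2 v"
  by (simp add: Finite_Cartesian_Product.vec_eq_iff)

lemma bounded_linear_pr1: "bounded_linear pr1"
proof -
  have "linear pr1" by (rule linearI) (simp_all add: Finite_Cartesian_Product.vec_eq_iff)
  then show ?thesis by (simp add: linear_conv_bounded_linear)
qed

lemma bounded_linear_pr2: "bounded_linear pr2"
proof -
  have "linear pr2" by (rule linearI) (simp_all add: Finite_Cartesian_Product.vec_eq_iff)
  then show ?thesis by (simp add: linear_conv_bounded_linear)
qed

lemma pr1_dbl: "z \<in> dbl X \<Longrightarrow> pr1 z \<in> X"
  by (simp add: dbl_def)

lemma pr2_dbl: "z \<in> dbl X \<Longrightarrow> pr2 z \<in> X"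
  by (simp add: dbl_def)

lemma holo_pr1: "holo x f \<Longrightarrow> holo (dpt x) (\<lambda>z. f (pr1 z))"
  using holo_compose_linear[OF bounded_linear_pr1 pr1_smult, of "dpt x"] by simp

lemma holo_pr2: "holo x f \<Longrightarrow> holo (dpt x) (\<lambda>z. f (pr2 z))"
  using holo_compose_linear[OF bounded_linear_pr2 pr2_smult, of "dpt x"] by simp

lemma germ_eq_pr1:
  "germ_eq X x f g \<Longrightarrow> germ_eq (dbl X) (dpt x) (\<lambda>z. f (pr1 z)) (\<lambda>z. g (pr1 z))"
  by (rule germ_eq_pullback[OF _ bounded_linear_pr1 pr1_dpt pr1_dbl])

lemma germ_eq_pr2:
  "germ_eq X x f g \<Longrightarrow> germ_eq (dbl X) (dpt x) (\<lambda>z. f (pr2 z)) (\<lambda>z. g (pr2 z))"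
  by (rule germ_eq_pullback[OF _ bounded_linear_pr2 pr2_dpt pr2_dbl])

lemma gen_ideal_pullback_pr1:
  assumes "holo (dpt x) Q" "\<And>s. s \<in> S \<Longrightarrow> (\<lambda>z. Q z * s (pr1 z)) \<in> gen_ideal (dbl X) (dpt x) R"
    "f \<in> gen_ideal X x S"
  shows "(\<lambda>z. Q z * f (pr1 z)) \<in> gen_ideal (dbl X) (dpt x) R"
  by (rule gen_ideal_pullback[OF bounded_linear_pr1 pr1_smult pr1_dpt pr1_dbl assms])

lemma gen_ideal_pullback_pr2:
  assumes "holo (dpt x) Q" "\<And>s. s \<in> S \<Longrightarrow> (\<lambda>z. Q z * s (pr2 z)) \<in> gen_ideal (dbl X) (dpt x) R"
    "f \<in> gen_ideal X x S"
  shows "(\<lambda>z. Q z * f (pr2 z)) \<in> gen_ideal (dbl X) (dpt x) R"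
  by (rule gen_ideal_pullback[OF bounded_linear_pr2 pr2_smult pr2_dpt pr2_dbl assms])

lemma vecD_nth_Inl [simp]: "vecD h z $ Inl i = h (pr1 z) $ i"
  by (simp add: vecD_def)

lemma vecD_nth_Inr [simp]: "vecD h z $ Inr i = h (pr2 z) $ i"
  by (simp add: vecD_def)

lemma holo_vec_vecD:
  fixes h :: "complex^'n::finite \<Rightarrow> complex^'q::finite"
  assumes "holo_vec x h" shows "holo_vec (dpt x) (vecD h)"
  unfolding holo_vec_def
proof
  fix j :: "'q + 'q"
  show "holo (dpt x) (\<lambda>z. vecD h z $ j)"
    using assms unfolding holo_vec_def by (cases j) (auto intro: holo_pr1 holo_pr2)
qed

lemma vecD_mem_mod_D: "holo_vec x c \<Longrightarrow> c \<in> N \<Longrightarrow> vecD c \<in> mod_D X x N"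
  unfolding mod_D_def
  by (rule gen_module_intro[where m = 1 and a = "\<lambda>_ _. 1" and s = "\<lambda>_. vecD c"])
    (auto intro: holo_vec_vecD)

lemma mod_D_holo_vec: "c \<in> mod_D X x N \<Longrightarrow> holo_vec (dpt x) c"
  unfolding mod_D_def by (rule gen_module_holo_vec)

definition diff_prod ::
    "nat \<Rightarrow> (nat \<Rightarrow> complex^'n::finite \<Rightarrow> complex) \<Rightarrow> complex^('n + 'n) \<Rightarrow> complex" where
  "diff_prod k e = (\<lambda>z. \<Prod>j<k. e j (pr1 z) - e j (pr2 z))"

definition delta_monomials :: "nat \<Rightarrow> (complex^('n::finite + 'n) \<Rightarrow> complex) set" where
  "delta_monomials k = {diff_prod k (\<lambda>j y. y $ \<iota> j) | \<iota>. True}"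

lemma holo_diff_prod: "(\<And>j. j < k \<Longrightarrow> holo x (e j)) \<Longrightarrow> holo (dpt x) (diff_prod k e)"
  unfolding diff_prod_def by (intro holo_prod holo_diff holo_pr1 holo_pr2) auto

lemma holo_delta_monomial: "P \<in> delta_monomials k \<Longrightarrow> holo (dpt x) P"
  unfolding delta_monomials_def by (auto intro: holo_diff_prod)

lemma ideal_pow_I_Delta_subset:
  fixes X :: "(complex^'n::finite) set"
  shows "ideal_pow (dbl X) (dpt x) (I_Delta X x) k \<subseteq> gen_ideal (dbl X) (dpt x) (delta_monomials k)"
proof (induction k)
  case 0
  have "(\<lambda>_. 1) \<in> (delta_monomials 0 :: (complex^('n + 'n) \<Rightarrow> complex) set)"
    unfolding delta_monomials_def diff_prod_def by simp
  then show ?case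
    by (auto intro!: gen_ideal_subset gen_ideal_generator)
next
  case (Suc k)
  have step: "(\<lambda>z. P z * (z $ Inl i - z $ Inr i)) \<in> delta_monomials (Suc k)"
    if P: "P \<in> delta_monomials k" for P and i :: 'n
  proof -
    obtain \<iota> where "P = diff_prod k (\<lambda>j y. y $ \<iota> j)"
      using P unfolding delta_monomials_def by blast
    then have "(\<lambda>z. P z * (z $ Inl i - z $ Inr i)) = diff_prod (Suc k) (\<lambda>j y. y $ (\<iota>(k := i)) j)"
      unfolding diff_prod_def by (auto intro!: prod.cong)
    then show ?thesis unfolding delta_monomials_def by blast
  qed
  show ?case unfolding ideal_pow.simps ideal_mult_def
  proof (rule gen_ideal_subset, clarify)
    fix f g assume f: "f \<in> ideal_pow (dbl X) (dpt x) (I_Delta X x) k" and g: "g \<in> I_Delta X x"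
    show "(\<lambda>y. f y * g y) \<in> gen_ideal (dbl X) (dpt x) (delta_monomials (Suc k))"
      by (rule gen_ideal_mult[OF holo_delta_monomial _ Suc.IH[THEN subsetD, OF f]
            g[unfolded I_Delta_def]])
        (auto intro!: gen_ideal_generator step holo_delta_monomial)
  qed
qed

section \<open>Minors of doubled modules\<close>

lemma diff_prod_mult_minors_mem:
  fixes M :: "(complex^'n::finite \<Rightarrow> complex^'p::finite) set"
  assumes M: "is_submodule X x M" and e: "\<And>j. j < k \<Longrightarrow> holo x (e j)"
    and c: "\<And>j. j < k \<Longrightarrow> c j \<in> M" and c': "\<And>j. j < k \<Longrightarrow> c' j \<in> M"
  shows "(\<lambda>z. diff_prod k e z * detk k (\<lambda>i j. c j (pr1 z) $ r i)
      * detk k (\<lambda>i j. c' j (pr2 z) $ r' i))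
    \<in> minor_ideal (dbl X) (dpt x) (2 * k) (mod_D X x M)"
proof -
  \<comment> \<open>The first k columns vanish in the rows of the second copy, so the matrix is block
    triangular.\<close>
  define col where "col j = (if j < k
      then (\<lambda>z. vecD (\<lambda>y. e j y *s c j y) z - e j (pr2 z) *s vecD (c j) z)
      else vecD (c' (j - k)))" for j
  define row where "row i = (if i < k then Inl (r i) else Inr (r' (i - k)))" for i
  have col_mem: "col j \<in> mod_D X x M" if "j < 2 * k" for j
  proof (cases "j < k")
    case True
    have ec: "(\<lambda>y. e j y *s c j y) \<in> M"
      using submodule_smult[OF M c[OF True] e[OF True]] .
    have "(\<lambda>z. vecD (\<lambda>y. e j y *s c j y) z - e j (pr2 z) *s vecD (c j) z) \<in> mod_D X x M"
      unfolding mod_D_def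
      by (rule gen_module_intro[where m = 2 and a = "\<lambda>i z. if i = 0 then 1 else - e j (pr2 z)"
            and s = "\<lambda>i. if i = 0 then vecD (\<lambda>y. e j y *s c j y) else vecD (c j)"])
        (use True ec c e in \<open>auto simp: numeral_2_eq_2 less_Suc_eq
          intro!: holo_uminus holo_pr2 holo_vec_vecD submodule_holo_vec[OF M]\<close>)
    then show ?thesis
      using True by (simp add: col_def)
  next
    case False
    then show ?thesis
      using that vecD_mem_mod_D[OF submodule_holo_vec[OF M c'] c'] by (simp add: col_def)
  qed
  have "(\<lambda>z. detk (2 * k) (\<lambda>i j. col j z $ row i))
      \<in> minor_ideal (dbl X) (dpt x) (2 * k) (mod_D X x M)"
    unfolding minor_ideal_def
    by (rule gen_ideal_generator) (auto intro!: holo_minor mod_D_holo_vec col_mem)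
  moreover have "detk (2 * k) (\<lambda>i j. col j z $ row i)
      = diff_prod k e z * detk k (\<lambda>i j. c j (pr1 z) $ r i)
        * detk k (\<lambda>i j. c' j (pr2 z) $ r' i)" for z
  proof -
    have "detk (2 * k) (\<lambda>i j. col j z $ row i)
        = detk k (\<lambda>i j. col j z $ row i) * detk k (\<lambda>i j. col (k + j) z $ row (k + i))"
      unfolding mult_2 by (rule detk_block_lower_left_zero) (auto simp: col_def row_def)
    also have "detk k (\<lambda>i j. col j z $ row i)
        = detk k (\<lambda>i j. (e j (pr1 z) - e j (pr2 z)) * c j (pr1 z) $ r i)"
      by (rule detk_cong) (auto simp: col_def row_def algebra_simps)
    also have "\<dots> = diff_prod k e z * detk k (\<lambda>i j. c j (pr1 z) $ r i)"
      unfolding diff_prod_def by (rule detk_mult_cols)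
    also have "detk k (\<lambda>i j. col (k + j) z $ row (k + i)) = detk k (\<lambda>i j. c' j (pr2 z) $ r' i)"
      by (rule detk_cong) (auto simp: col_def row_def)
    finally show ?thesis .
  qed
  ultimately show ?thesis
    by simp
qed

lemma diff_prod_mult_minor_ideal_mem:
  fixes M :: "(complex^'n::finite \<Rightarrow> complex^'p::finite) set"
  assumes M: "is_submodule X x M" and e: "\<And>j. j < k \<Longrightarrow> holo x (e j)"
    and f: "f \<in> minor_ideal X x k M" and g: "g \<in> minor_ideal X x k M"
  shows "(\<lambda>z. diff_prod k e z * f (pr1 z) * g (pr2 z))
    \<in> minor_ideal (dbl X) (dpt x) (2 * k) (mod_D X x M)"
proof -
  let ?minors = "{\<lambda>y. detk k (\<lambda>i j. c j y $ r i) | c r. \<forall>j<k. c j \<in> M}"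
  let ?K = "minor_ideal (dbl X) (dpt x) (2 * k) (mod_D X x M)"
  have holo_minors: "holo x t" if "t \<in> ?minors" for t
    using that by (auto intro!: holo_minor submodule_holo_vec[OF M])
  have "(\<lambda>z. diff_prod k e z * f (pr1 z) * t (pr2 z)) \<in> ?K" if t: "t \<in> ?minors" for t
  proof -
    have "(\<lambda>z. (diff_prod k e z * t (pr2 z)) * s (pr1 z)) \<in> ?K" if s: "s \<in> ?minors" for s
    proof -
      obtain c r where s: "s = (\<lambda>y. detk k (\<lambda>i j. c j y $ r i))" and c: "\<forall>j<k. c j \<in> M"
        using s by blast
      obtain c' r' where t: "t = (\<lambda>y. detk k (\<lambda>i j. c' j y $ r' i))" and c': "\<forall>j<k. c' j \<in> M"
        using t by blast
      have "(\<lambda>z. diff_prod k e z * detk k (\<lambda>i j. c j (pr1 z) $ r i)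
          * detk k (\<lambda>i j. c' j (pr2 z) $ r' i)) \<in> ?K"
        using c c' by (intro diff_prod_mult_minors_mem[OF M e]) auto
      then show ?thesis
        unfolding s t by (simp add: mult_ac)
    qed
    moreover have "holo (dpt x) (\<lambda>z. diff_prod k e z * t (pr2 z))"
      by (rule holo_mult[OF holo_diff_prod[OF e] holo_pr2[OF holo_minors[OF t]]])
    ultimately have "(\<lambda>z. (diff_prod k e z * t (pr2 z)) * f (pr1 z)) \<in> ?K"
      unfolding minor_ideal_def
      by (intro gen_ideal_pullback_pr1[OF _ _ f[unfolded minor_ideal_def]])
    then show ?thesis
      by (simp add: mult_ac)
  qed
  moreover have "holo (dpt x) (\<lambda>z. diff_prod k e z * f (pr1 z))"
    by (rule holo_mult[OF holo_diff_prod[OF e] holo_pr1[OF minor_ideal_holo[OF f]]])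
  ultimately show ?thesis
    unfolding minor_ideal_def by (intro gen_ideal_pullback_pr2[OF _ _ g[unfolded minor_ideal_def]])
qed

definition minor2_D ::
    "(complex^'n::finite \<Rightarrow> complex) \<Rightarrow> (complex^'n \<Rightarrow> complex) \<Rightarrow> complex^('n + 'n) \<Rightarrow> complex"
  where
  "minor2_D f g = (\<lambda>z. f (pr1 z) * g (pr2 z) - g (pr1 z) * f (pr2 z))"

lemma germ_eq_minor2_D:
  assumes "germ_eq X x f f'" "germ_eq X x g g'"
  shows "germ_eq (dbl X) (dpt x) (minor2_D f g) (minor2_D f' g')"
  using germ_eq_pr1[OF assms(1)] germ_eq_pr2[OF assms(1)]
    germ_eq_pr1[OF assms(2)] germ_eq_pr2[OF assms(2)]
  unfolding germ_eq_iff_eventually minor2_D_def by eventually_elim simp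

lemma delta_monomial_mult_minor2_D_mem:
  fixes M :: "(complex^'n::finite \<Rightarrow> complex^'p::finite) set"
  assumes M: "is_submodule X x M" and P: "P \<in> delta_monomials k"
    and f: "f \<in> minor_ideal X x k M" and g: "g \<in> minor_ideal X x k M"
  shows "(\<lambda>z. P z * minor2_D f g z) \<in> minor_ideal (dbl X) (dpt x) (2 * k) (mod_D X x M)"
proof -
  obtain \<iota> where P_eq: "P = diff_prod k (\<lambda>j y. y $ \<iota> j)"
    using P unfolding delta_monomials_def by blast
  have "(\<lambda>z. P z * f (pr1 z) * g (pr2 z)) \<in> minor_ideal (dbl X) (dpt x) (2 * k) (mod_D X x M)"
    "(\<lambda>z. P z * g (pr1 z) * f (pr2 z)) \<in> minor_ideal (dbl X) (dpt x) (2 * k) (mod_D X x M)"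
    unfolding P_eq by (intro diff_prod_mult_minor_ideal_mem[OF M] f g holo_coord)+
  from gen_ideal_diff[OF this[unfolded minor_ideal_def]] show ?thesis
    unfolding minor_ideal_def minor2_D_def by (simp add: algebra_simps)
qed

lemma delta_monomial_mult_minor2_D_mem_principal:
  fixes M :: "(complex^'n::finite \<Rightarrow> complex^'p::finite) set"
  assumes M: "is_submodule X x M" and principal: "principal_ideal X x (minor_ideal X x (Suc k) M)"
    and P: "P \<in> delta_monomials k"
    and f: "f \<in> minor_ideal X x (Suc k) M" and f': "f' \<in> minor_ideal X x (Suc k) M"
  shows "(\<lambda>z. P z * minor2_D f f' z) \<in> minor_ideal (dbl X) (dpt x) (2 * Suc k) (mod_D X x M)"
proof -
  let ?K = "minor_ideal (dbl X) (dpt x) (2 * Suc k) (mod_D X x M)"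
  obtain g where g: "holo x g" and I: "minor_ideal X x (Suc k) M = gen_ideal X x {g}"
    using principal unfolding principal_ideal_def by blast
  have gI: "g \<in> minor_ideal X x (Suc k) M"
    unfolding I using g by (intro gen_ideal_generator) auto
  obtain a where a: "holo x a" "germ_eq X x f (\<lambda>y. a y * g y)"
    using f unfolding I by (rule gen_ideal_singletonE)
  obtain b where b: "holo x b" "germ_eq X x f' (\<lambda>y. b y * g y)"
    using f' unfolding I by (rule gen_ideal_singletonE)
  obtain \<iota> where P_eq: "P = diff_prod k (\<lambda>j y. y $ \<iota> j)"
    using P unfolding delta_monomials_def by blast
  \<comment> \<open>The difference of a germ h plays the role of the k-th coordinate difference.\<close>
  have diff_mem: "(\<lambda>z. (h (pr1 z) - h (pr2 z)) * P z * g (pr1 z) * g (pr2 z)) \<in> ?K"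
    if h: "holo x h" for h
  proof -
    define e where "e j = (if j = 0 then h else (\<lambda>y. y $ \<iota> (j - 1)))" for j
    have "diff_prod (Suc k) e = (\<lambda>z. (h (pr1 z) - h (pr2 z)) * P z)"
      unfolding P_eq diff_prod_def prod.lessThan_Suc_shift by (simp add: e_def)
    moreover have "(\<lambda>z. diff_prod (Suc k) e z * g (pr1 z) * g (pr2 z)) \<in> ?K"
      using h by (intro diff_prod_mult_minor_ideal_mem[OF M _ gI gI]) (simp add: e_def)
    ultimately show ?thesis
      by simp
  qed
  have "(\<lambda>z. b (pr2 z) * ((a (pr1 z) - a (pr2 z)) * P z * g (pr1 z) * g (pr2 z))
      - a (pr2 z) * ((b (pr1 z) - b (pr2 z)) * P z * g (pr1 z) * g (pr2 z))) \<in> ?K"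
    unfolding minor_ideal_def
    by (intro gen_ideal_diff gen_ideal_mult_left holo_pr2 a b diff_mem[unfolded minor_ideal_def])
  also have "(\<lambda>z. b (pr2 z) * ((a (pr1 z) - a (pr2 z)) * P z * g (pr1 z) * g (pr2 z))
      - a (pr2 z) * ((b (pr1 z) - b (pr2 z)) * P z * g (pr1 z) * g (pr2 z)))
    = (\<lambda>z. P z * minor2_D (\<lambda>y. a y * g y) (\<lambda>y. b y * g y) z)"
    unfolding minor2_D_def by (simp add: algebra_simps)
  finally have ag_bg: "(\<lambda>z. P z * minor2_D (\<lambda>y. a y * g y) (\<lambda>y. b y * g y) z) \<in> ?K" .
  have germ: "germ_eq (dbl X) (dpt x) (\<lambda>z. P z * minor2_D f f' z)
      (\<lambda>z. P z * minor2_D (\<lambda>y. a y * g y) (\<lambda>y. b y * g y) z)"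
    using germ_eq_refl germ_eq_minor2_D[OF a(2) b(2)] by (rule germ_eq_cong)
  have holo: "holo (dpt x) (\<lambda>z. P z * minor2_D f f' z)"
    unfolding minor2_D_def
    by (intro holo_mult holo_diff holo_delta_monomial[OF P] holo_pr1 holo_pr2
        minor_ideal_holo[OF f] minor_ideal_holo[OF f'])
  show ?thesis
    unfolding minor_ideal_def by (rule gen_ideal_germ_eq[OF holo germ ag_bg[unfolded minor_ideal_def]])
qed

lemma mult_minor2_mod_D_mem:
  fixes I :: "(complex^'n::finite \<Rightarrow> complex) set"
  assumes I: "\<And>f. f \<in> I \<Longrightarrow> holo x f"
    and H: "\<And>f g. f \<in> I \<Longrightarrow> g \<in> I \<Longrightarrow> (\<lambda>z. P z * minor2_D f g z) \<in> gen_ideal (dbl X) (dpt x) R"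
    and P: "holo (dpt x) P"
    and a: "a \<in> mod_D X x (as_module I)" and b: "b \<in> mod_D X x (as_module I)"
  shows "(\<lambda>z. P z * (a z $ \<rho> * b z $ \<rho>' - b z $ \<rho> * a z $ \<rho>')) \<in> gen_ideal (dbl X) (dpt x) R"
proof -
  let ?gens = "vecD ` as_module I"
  have gens: "\<exists>f\<in>I. s = vecD (\<lambda>y. \<chi> _. f y)" if "s \<in> ?gens" for s
    using that unfolding as_module_def by blast
  have gen_holo_vec: "holo_vec (dpt x) s" if s: "s \<in> ?gens" for s
  proof -
    obtain f where "f \<in> I" "s = vecD (\<lambda>y. \<chi> _. f y)"
      using gens[OF s] by blast
    moreover from \<open>f \<in> I\<close> have "holo_vec x (\<lambda>y. \<chi> _. f y)"
      by (simp add: holo_vec_def I)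
    ultimately show ?thesis
      by (metis holo_vec_vecD)
  qed
  have holo_minor2: "holo (dpt x) (\<lambda>z. P z * (s z $ \<rho> * t z $ \<rho>' - t z $ \<rho> * s z $ \<rho>'))"
    if "holo_vec (dpt x) s" "holo_vec (dpt x) t" for s t
    using that P unfolding holo_vec_def by (intro holo_mult holo_diff) auto
  have gen_gen:
    "(\<lambda>z. P z * (s z $ \<rho> * t z $ \<rho>' - t z $ \<rho> * s z $ \<rho>')) \<in> gen_ideal (dbl X) (dpt x) R"
    if s: "s \<in> ?gens" and t: "t \<in> ?gens" for s t
  proof -
    obtain f where f: "f \<in> I" "s = vecD (\<lambda>y. \<chi> _. f y)"
      using gens[OF s] by blast
    obtain g where g: "g \<in> I" "t = vecD (\<lambda>y. \<chi> _. g y)"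
      using gens[OF t] by blast
    note fg = f(1) g(1) f(2) g(2)
    \<comment> \<open>As generators have one coordinate, two rows from the same copy coincide.\<close>
    show ?thesis
    proof (cases \<rho>; cases \<rho>')
      fix u v assume "\<rho> = Inl u" "\<rho>' = Inr v"
      then show ?thesis
        using H[OF fg(1,2)] by (simp add: fg minor2_D_def)
    next
      fix u v assume "\<rho> = Inr u" "\<rho>' = Inl v"
      then show ?thesis
        using H[OF fg(2,1)] by (simp add: fg minor2_D_def mult.commute)
    qed (simp_all add: fg gen_ideal_zero)
  qed
  have gen_mod:
    "(\<lambda>z. P z * (s z $ \<rho> * b z $ \<rho>' - b z $ \<rho> * s z $ \<rho>')) \<in> gen_ideal (dbl X) (dpt x) R"
    if s: "s \<in> ?gens" for s
  proof (rule gen_module_linear_functional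
      [where \<Phi> = "\<lambda>z v. P z * (s z $ \<rho> * v $ \<rho>' - v $ \<rho> * s z $ \<rho>')"])
    show "b \<in> gen_module (dbl X) (dpt x) ?gens"
      using b unfolding mod_D_def .
    show "holo (dpt x) (\<lambda>z. P z * (s z $ \<rho> * b z $ \<rho>' - b z $ \<rho> * s z $ \<rho>'))"
      by (rule holo_minor2[OF gen_holo_vec[OF s] mod_D_holo_vec[OF b]])
  qed (use gen_gen[OF s] in \<open>simp_all add: algebra_simps\<close>)
  show ?thesis
  proof (rule gen_module_linear_functional
      [where \<Phi> = "\<lambda>z v. P z * (v $ \<rho> * b z $ \<rho>' - b z $ \<rho> * v $ \<rho>')"])
    show "a \<in> gen_module (dbl X) (dpt x) ?gens"
      using a unfolding mod_D_def .
    show "holo (dpt x) (\<lambda>z. P z * (a z $ \<rho> * b z $ \<rho>' - b z $ \<rho> * a z $ \<rho>'))"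
      by (rule holo_minor2[OF mod_D_holo_vec[OF a] mod_D_holo_vec[OF b]])
  qed (use gen_mod in \<open>simp_all add: algebra_simps\<close>)
qed

lemma ideal_mult_pow_I_Delta_minor_ideal_2_subset:
  fixes I :: "(complex^'n::finite \<Rightarrow> complex) set"
    and N :: "(complex^('n + 'n) \<Rightarrow> complex^'q::finite) set"
  assumes I: "\<And>f. f \<in> I \<Longrightarrow> holo x f"
    and H: "\<And>P f g. P \<in> delta_monomials j \<Longrightarrow> f \<in> I \<Longrightarrow> g \<in> I \<Longrightarrow>
      (\<lambda>z. P z * minor2_D f g z) \<in> minor_ideal (dbl X) (dpt x) K N"
  shows "ideal_mult (dbl X) (dpt x) (ideal_pow (dbl X) (dpt x) (I_Delta X x) j)
      (minor_ideal (dbl X) (dpt x) 2 (mod_D X x (as_module I))) \<subseteq> minor_ideal (dbl X) (dpt x) K N"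
  unfolding ideal_mult_def minor_ideal_def[of "dbl X" "dpt x" K N]
proof (rule gen_ideal_subset, clarify)
  fix \<phi> \<psi>
  assume \<phi>: "\<phi> \<in> ideal_pow (dbl X) (dpt x) (I_Delta X x) j"
    and \<psi>: "\<psi> \<in> minor_ideal (dbl X) (dpt x) 2 (mod_D X x (as_module I))"
  have \<phi>': "\<phi> \<in> gen_ideal (dbl X) (dpt x) (delta_monomials j)"
    using ideal_pow_I_Delta_subset \<phi> by blast
  have gen: "(\<lambda>y. P y * t y) \<in> gen_ideal (dbl X) (dpt x)
      {\<lambda>y. detk K (\<lambda>i j. c j y $ r i) | c r. \<forall>j<K. c j \<in> N}"
    if P: "P \<in> delta_monomials j"
      and t: "t \<in> {\<lambda>y. detk 2 (\<lambda>i j. c j y $ r i) | c r. \<forall>j<2. c j \<in> mod_D X x (as_module I)}"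
    for P t
  proof -
    obtain c r where t: "t = (\<lambda>y. detk 2 (\<lambda>i j. c j y $ r i))"
      and c: "\<forall>j<2. c j \<in> mod_D X x (as_module I)"
      using t by blast
    show ?thesis unfolding t detk_2
      by (rule mult_minor2_mod_D_mem[OF I H[OF P, unfolded minor_ideal_def]])
        (use P c in \<open>auto intro: holo_delta_monomial\<close>)
  qed
  show "(\<lambda>y. \<phi> y * \<psi> y) \<in> gen_ideal (dbl X) (dpt x)
      {\<lambda>y. detk K (\<lambda>i j. c j y $ r i) | c r. \<forall>j<K. c j \<in> N}"
    by (rule gen_ideal_mult[OF holo_delta_monomial gen \<phi>' \<psi>[unfolded minor_ideal_def]])
qed

theorem lemma3p3:
  fixes X :: "(complex^'n::finite) set" and x :: "complex^'n"
    and M :: "(complex^'n \<Rightarrow> complex^'p::finite) set" and k :: nat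
  assumes "analytic_variety X" and "x \<in> X" and "is_submodule X x M"
  shows "ideal_mult (dbl X) (dpt x) (ideal_pow (dbl X) (dpt x) (I_Delta X x) k)
           (minor_ideal (dbl X) (dpt x) 2 (mod_D X x (as_module (minor_ideal X x k M))))
         \<subseteq> minor_ideal (dbl X) (dpt x) (2 * k) (mod_D X x M)
       \<and> (principal_ideal X x (minor_ideal X x k M) \<longrightarrow>
         ideal_mult (dbl X) (dpt x) (ideal_pow (dbl X) (dpt x) (I_Delta X x) (k - 1))
           (minor_ideal (dbl X) (dpt x) 2 (mod_D X x (as_module (minor_ideal X x k M))))
         \<subseteq> minor_ideal (dbl X) (dpt x) (2 * k) (mod_D X x M))"
proof -
  note M = \<open>is_submodule X x M\<close>
  have part_a: "ideal_mult (dbl X) (dpt x) (ideal_pow (dbl X) (dpt x) (I_Delta X x) k)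
      (minor_ideal (dbl X) (dpt x) 2 (mod_D X x (as_module (minor_ideal X x k M))))
    \<subseteq> minor_ideal (dbl X) (dpt x) (2 * k) (mod_D X x M)"
    by (intro ideal_mult_pow_I_Delta_minor_ideal_2_subset minor_ideal_holo
        delta_monomial_mult_minor2_D_mem[OF M])
  moreover have "ideal_mult (dbl X) (dpt x) (ideal_pow (dbl X) (dpt x) (I_Delta X x) (k - 1))
      (minor_ideal (dbl X) (dpt x) 2 (mod_D X x (as_module (minor_ideal X x k M))))
    \<subseteq> minor_ideal (dbl X) (dpt x) (2 * k) (mod_D X x M)"
    if principal: "principal_ideal X x (minor_ideal X x k M)"
  proof (cases k)
    case 0
    with part_a show ?thesis by simp
  next
    case (Suc k')
    show ?thesis unfolding Suc diff_Suc_1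
      by (intro ideal_mult_pow_I_Delta_minor_ideal_2_subset minor_ideal_holo
          delta_monomial_mult_minor2_D_mem_principal[OF M principal[unfolded Suc]])
  qed
  ultimately show ?thesis
    by blast
qed

end
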